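(* Let $C_0>0$. (i) For any linear spaces $S_D,S_{D'}$ of functions $\mathcal{X}\to\mathbb{R}$ of dimensions $D$ and $D'$, and every $x\ge0$, $$\mathbb{P}\Big(\sup_{u\in (S_D\cap\mathbb{L}_\infty(C_0))+(S_{D'}\cap\mathbb{L}_\infty(C_0))}\frac{\langle\vec\varepsilon,u\rangle_n}{\|u\|_n}>\sqrt{\frac{D+D'}{4n}}+\sqrt{\frac{5x}{n}}\Big)\le\exp(-x).$$ (ii) Let $\{L_m\}_{m\in\mathcal{M}}$ be positive numbers with $\Sigma=\sum_{m\in\mathcal{M}}\exp(-L_mD_m)<\infty$. For $\xi>0$ and $m\in\mathcal{M}$ let $$\Omega_\xi(m)=\bigcap_{m'\in\mathcal{M}}\Big\{\sup_{u\in(\mathcal{S}_m\cap\mathbb{L}_\infty(C_0))+(\mathcal{S}_{m'}\cap\mathbb{L}_\infty(C_0))}\frac{\langle\vec\varepsilon,u\rangle_n}{\|u\|_n}\le\sqrt{\frac{D_m+D_{m'}}{4n}}+\sqrt{\frac{5(L_{m'}D_{m'}+\xi)}{n}}\Big\}.$$ Then $\mathbb{P}(\Omega_\xi(m))\ge1-\Sigma\exp(-\xi)$.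
   Context: Observations $(Y_1,x_1),\dots,(Y_n,x_n)\in\{0,1\}\times\mathcal{X}$, deterministic $x_i$, independent $Y_i$ with $\mathbb{E}_{f_0}(Y_i)=\pi_{f_0}(x_i)$, $\pi_f(x)=e^{f(x)}/(1+e^{f(x)})$. $\varepsilon_i=Y_i-\mathbb{E}_{f_0}(Y_i)$, $\vec\varepsilon=(\varepsilon_1,\dots,\varepsilon_n)$, $\langle\vec\varepsilon,u\rangle_n=\frac1n\sum_{i=1}^n\varepsilon_iu(x_i)$, $\|u\|_n^2=\frac1n\sum_i u(x_i)^2$ (suprema are over $u$ with $\|u\|_n\neq0$). A dictionary $\{\phi_1,\dots,\phi_M\}$ is fixed; $\mathcal{M}$ is the set of subsets $m\subset\{1,\dots,M\}$, $\mathcal{S}_m=\{\sum_{j\in m}\beta_j\phi_j\}$, $D_m=\dim\mathrm{span}\{\phi_j,j\in m\}$. $\mathbb{L}_\infty(C_0)=\{f:\max_{1\le i\le n}|f(x_i)|\le C_0\}$. *)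

theory Defs
  imports "HOL-Analysis.Analysis" "HOL-Probability.Probability" "HOL-Library.Function_Algebras"
begin

definition fscale :: "real \<Rightarrow> ('x \<Rightarrow> real) \<Rightarrow> ('x \<Rightarrow> real)" where
  "fscale c f = (\<lambda>z. c * f z)"

interpretation fvs: vector_space "fscale :: real \<Rightarrow> ('x \<Rightarrow> real) \<Rightarrow> ('x \<Rightarrow> real)"
  by unfold_locales (auto simp: fscale_def fun_eq_iff algebra_simps)

definition lin_space_dim :: "('x \<Rightarrow> real) set \<Rightarrow> nat \<Rightarrow> bool" where
  "lin_space_dim S D \<longleftrightarrow> fvs.subspace S \<and> (\<exists>B. finite B \<and> S = fvs.span B) \<and> fvs.dim S = D"

definition logistic :: "real \<Rightarrow> real" where
  "logistic t = exp t / (1 + exp t)"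

text \<open>Law of the sample (Y_0,...,Y_{n-1}): independent Bernoulli(pi_{f0}(x_i)); Y_i = 1 iff omega i.\<close>
definition sample_law :: "nat \<Rightarrow> (nat \<Rightarrow> 'x) \<Rightarrow> ('x \<Rightarrow> real) \<Rightarrow> (nat \<Rightarrow> bool) pmf" where
  "sample_law n x f0 = Pi_pmf {..<n} False (\<lambda>i. bernoulli_pmf (logistic (f0 (x i))))"

definition eps :: "(nat \<Rightarrow> 'x) \<Rightarrow> ('x \<Rightarrow> real) \<Rightarrow> (nat \<Rightarrow> bool) \<Rightarrow> nat \<Rightarrow> real" where
  "eps x f0 \<omega> i = of_bool (\<omega> i) - logistic (f0 (x i))"

definition emp_inner :: "nat \<Rightarrow> (nat \<Rightarrow> 'x) \<Rightarrow> (nat \<Rightarrow> real) \<Rightarrow> ('x \<Rightarrow> real) \<Rightarrow> real" where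
  "emp_inner n x e u = (1 / real n) * (\<Sum>i<n. e i * u (x i))"

definition emp_norm :: "nat \<Rightarrow> (nat \<Rightarrow> 'x) \<Rightarrow> ('x \<Rightarrow> real) \<Rightarrow> real" where
  "emp_norm n x u = sqrt ((1 / real n) * (\<Sum>i<n. (u (x i))\<^sup>2))"

definition Linf :: "nat \<Rightarrow> (nat \<Rightarrow> 'x) \<Rightarrow> real \<Rightarrow> ('x \<Rightarrow> real) set" where
  "Linf n x C0 = {f. \<forall>i<n. \<bar>f (x i)\<bar> \<le> C0}"

definition msum :: "('x \<Rightarrow> real) set \<Rightarrow> ('x \<Rightarrow> real) set \<Rightarrow> ('x \<Rightarrow> real) set" where
  "msum A B = {a + b | a b. a \<in> A \<and> b \<in> B}"

text \<open>sup over u in A with ||u||_n <> 0 of <eps,u>_n/||u||_n, in the extended reals (empty sup = -infinity).\<close>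
definition sup_ratio :: "nat \<Rightarrow> (nat \<Rightarrow> 'x) \<Rightarrow> (nat \<Rightarrow> real) \<Rightarrow> ('x \<Rightarrow> real) set \<Rightarrow> ereal" where
  "sup_ratio n x e A = (SUP u\<in>{u\<in>A. emp_norm n x u \<noteq> 0}. ereal (emp_inner n x e u / emp_norm n x u))"

definition Smodel :: "(nat \<Rightarrow> 'x \<Rightarrow> real) \<Rightarrow> nat set \<Rightarrow> ('x \<Rightarrow> real) set" where
  "Smodel \<phi> m = {(\<lambda>z. \<Sum>j\<in>m. \<beta> j * \<phi> j z) | \<beta>. True}"

definition Dm :: "(nat \<Rightarrow> 'x \<Rightarrow> real) \<Rightarrow> nat set \<Rightarrow> nat" where
  "Dm \<phi> m = fvs.dim (fvs.span (\<phi> ` m))"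

end

theory Submission
  imports Defs "HOL-Probability.Hoeffding"
begin

text \<open>
  On the design points every u \<in> S + S' lies in a subspace of dimension K \<le> D + D'. For an
  orthonormal basis w_1, ..., w_K of it, Cauchy-Schwarz bounds the ratio <\<epsilon>, u>_n / |u|_n by
  sqrt (Q / n), where Q = \<Sum>_k <w_k, \<epsilon>>^2 is the squared norm of the projection of \<epsilon>.
  The \<epsilon>_i are independent, centred and range over intervals of length 1, so by Hoeffding's
  lemma \<epsilon> is sub-Gaussian with variance proxy 1/4. Writing exp (2 \<mu> Q) as a Gaussian average of
  exponentials of linear forms in \<epsilon> gives E exp (2 \<mu> Q) \<le> (1 - \<mu>) powr (- K / 2), and a Chernoff
  bound with \<mu> = min (1/2) (sqrt (t / d)) yields (i). Part (ii) is a union bound over the finitely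
  many models.
\<close>

section \<open>Gaussian integrals\<close>

abbreviation std_normal :: "real measure" where
  "std_normal \<equiv> density lborel std_normal_density"

lemma nn_integral_normal_density:
  assumes "\<sigma> > 0"
  shows "(\<integral>\<^sup>+ g. ennreal (normal_density \<mu> \<sigma> g) \<partial>lborel) = 1"
proof -
  have "emeasure (density lborel (normal_density \<mu> \<sigma>)) UNIV = 1"
    using prob_space.emeasure_space_1[OF prob_space_normal_density[OF assms]] by simp
  thus ?thesis by (simp add: emeasure_density)
qed

lemma std_normal_nn_integral_exp_linear:
  "(\<integral>\<^sup>+ g. ennreal (exp (s * g)) \<partial>std_normal) = ennreal (exp (s\<^sup>2 / 2))"
proof -
  have shift: "std_normal_density g * exp (s * g) = exp (s\<^sup>2 / 2) * normal_density s 1 g" for g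
  proof -
    have "- g\<^sup>2 / 2 + s * g = s\<^sup>2 / 2 + (- (g - s)\<^sup>2 / 2)"
      by (simp add: power2_eq_square field_simps)
    thus ?thesis
      by (simp add: std_normal_density_def normal_density_def exp_add[symmetric])
  qed
  have "(\<integral>\<^sup>+ g. ennreal (exp (s * g)) \<partial>std_normal)
      = (\<integral>\<^sup>+ g. ennreal (exp (s\<^sup>2 / 2)) * ennreal (normal_density s 1 g) \<partial>lborel)"
    by (subst nn_integral_density)
       (auto intro!: nn_integral_cong simp: shift[symmetric] ennreal_mult'[symmetric])
  also have "\<dots> = ennreal (exp (s\<^sup>2 / 2))"
    by (subst nn_integral_cmult) (auto simp: nn_integral_normal_density)
  finally show ?thesis .
qed

lemma std_normal_nn_integral_exp_square:
  assumes "a < 1 / 2"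
  shows "(\<integral>\<^sup>+ g. ennreal (exp (a * g\<^sup>2)) \<partial>std_normal) = ennreal (1 / sqrt (1 - 2 * a))"
proof -
  define \<sigma> where "\<sigma> = 1 / sqrt (1 - 2 * a)"
  have pos: "1 - 2 * a > 0" using assms by simp
  have \<sigma>2: "\<sigma>\<^sup>2 = 1 / (1 - 2 * a)" using pos by (simp add: \<sigma>_def power_divide)
  have \<sigma>0: "\<sigma> > 0" using pos by (simp add: \<sigma>_def)
  have rescale: "std_normal_density g * exp (a * g\<^sup>2) = \<sigma> * normal_density 0 \<sigma> g" for g
  proof -
    have "exp (- g\<^sup>2 / 2) * exp (a * g\<^sup>2) = exp (- (g - 0)\<^sup>2 / (2 * \<sigma>\<^sup>2))"
      using pos by (simp add: exp_add[symmetric] \<sigma>2 field_simps)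
    moreover have "1 / sqrt (2 * pi) = \<sigma> * (1 / sqrt (2 * pi * \<sigma>\<^sup>2))"
      using pos by (simp add: \<sigma>_def real_sqrt_mult \<sigma>2 real_sqrt_divide field_simps)
    ultimately show ?thesis by (simp add: std_normal_density_def normal_density_def)
  qed
  have "(\<integral>\<^sup>+ g. ennreal (exp (a * g\<^sup>2)) \<partial>std_normal)
      = (\<integral>\<^sup>+ g. ennreal \<sigma> * ennreal (normal_density 0 \<sigma> g) \<partial>lborel)"
    using \<sigma>0 by (subst nn_integral_density)
       (auto intro!: nn_integral_cong simp: rescale[symmetric] ennreal_mult'[symmetric])
  also have "\<dots> = ennreal \<sigma>"
    using \<sigma>0 by (subst nn_integral_cmult) (auto simp: nn_integral_normal_density)
  finally show ?thesis by (simp add: \<sigma>_def)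
qed

interpretation std_normal_product: product_sigma_finite "\<lambda>_::nat. std_normal"
  unfolding product_sigma_finite_def
  using prob_space_imp_sigma_finite[OF prob_space_normal_density[of 1]] by simp

lemma std_normal_PiM_nn_integral_exp_linear:
  fixes K :: nat
  shows "(\<integral>\<^sup>+ g. ennreal (exp (\<Sum>k<K. c k * g k)) \<partial>PiM {..<K} (\<lambda>_. std_normal))
     = ennreal (exp (\<Sum>k<K. (c k)\<^sup>2 / 2))"
proof -
  have "(\<integral>\<^sup>+ g. ennreal (exp (\<Sum>k<K. c k * g k)) \<partial>PiM {..<K} (\<lambda>_. std_normal))
      = (\<integral>\<^sup>+ g. (\<Prod>k<K. ennreal (exp (c k * g k))) \<partial>PiM {..<K} (\<lambda>_. std_normal))"
    by (simp add: exp_sum prod_ennreal)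
  also have "\<dots> = (\<Prod>k<K. \<integral>\<^sup>+ g. ennreal (exp (c k * g)) \<partial>std_normal)"
    by (rule std_normal_product.product_nn_integral_prod) auto
  finally show ?thesis
    by (simp add: std_normal_nn_integral_exp_linear exp_sum prod_ennreal)
qed

lemma std_normal_PiM_nn_integral_exp_square:
  fixes K :: nat
  assumes "a < 1 / 2"
  shows "(\<integral>\<^sup>+ g. ennreal (exp (a * (\<Sum>k<K. (g k)\<^sup>2))) \<partial>PiM {..<K} (\<lambda>_. std_normal))
     = ennreal ((1 / sqrt (1 - 2 * a)) ^ K)"
proof -
  have "(\<integral>\<^sup>+ g. ennreal (exp (a * (\<Sum>k<K. (g k)\<^sup>2))) \<partial>PiM {..<K} (\<lambda>_. std_normal))
      = (\<integral>\<^sup>+ g. (\<Prod>k<K. ennreal (exp (a * (g k)\<^sup>2))) \<partial>PiM {..<K} (\<lambda>_. std_normal))"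
    by (simp add: sum_distrib_left exp_sum prod_ennreal)
  also have "\<dots> = (\<Prod>k<K. \<integral>\<^sup>+ g. ennreal (exp (a * g\<^sup>2)) \<partial>std_normal)"
    by (rule std_normal_product.product_nn_integral_prod) auto
  finally show ?thesis
    using assms by (simp add: std_normal_nn_integral_exp_square ennreal_power)
qed

section \<open>Sub-Gaussianity of the centred sample\<close>

lemma bernoulli_centered_mgf_le:
  fixes c p :: real
  assumes "0 \<le> p" "p \<le> 1"
  shows "(\<integral>\<^sup>+ b. ennreal (exp (c * (of_bool b - p))) \<partial>bernoulli_pmf p) \<le> ennreal (exp (c\<^sup>2 / 8))"
proof (cases c "0::real" rule: linorder_cases)
  case less
  interpret interval_bounded_random_variable "bernoulli_pmf p" "\<lambda>b. - of_bool b" "-1" 0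
    by unfold_locales auto
  show ?thesis
    using Hoeffdings_lemma_nn_integral[of "-c"] less assms by (simp add: algebra_simps)
next
  case greater
  interpret interval_bounded_random_variable "bernoulli_pmf p" "\<lambda>b. of_bool b" 0 1
    by unfold_locales auto
  show ?thesis
    using Hoeffdings_lemma_nn_integral[of c] greater assms by simp
qed (use assms in simp)

lemma Pi_bernoulli_centered_mgf_le:
  fixes n :: nat
  assumes "\<And>i. i < n \<Longrightarrow> 0 \<le> p i \<and> p i \<le> 1"
  shows "(\<integral>\<^sup>+ \<omega>. ennreal (exp (\<Sum>i<n. a i * (of_bool (\<omega> i) - p i)))
            \<partial>Pi_pmf {..<n} False (\<lambda>i. bernoulli_pmf (p i)))
         \<le> ennreal (exp ((\<Sum>i<n. (a i)\<^sup>2) / 8))"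
proof -
  have "(\<integral>\<^sup>+ \<omega>. ennreal (exp (\<Sum>i<n. a i * (of_bool (\<omega> i) - p i)))
            \<partial>Pi_pmf {..<n} False (\<lambda>i. bernoulli_pmf (p i)))
      = (\<integral>\<^sup>+ \<omega>. (\<Prod>i<n. (\<lambda>i b. ennreal (exp (a i * (of_bool b - p i)))) i (\<omega> i))
            \<partial>Pi_pmf {..<n} False (\<lambda>i. bernoulli_pmf (p i)))"
    by (simp add: exp_sum prod_ennreal)
  also have "\<dots> = (\<Prod>i<n. \<integral>\<^sup>+ b. ennreal (exp (a i * (of_bool b - p i))) \<partial>bernoulli_pmf (p i))"
    by (rule nn_integral_prod_Pi_pmf) simp
  also have "\<dots> \<le> (\<Prod>i<n. ennreal (exp ((a i)\<^sup>2 / 8)))"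
    using assms by (intro prod_mono_ennreal bernoulli_centered_mgf_le) auto
  also have "\<dots> = ennreal (exp ((\<Sum>i<n. (a i)\<^sup>2) / 8))"
    by (simp add: exp_sum prod_ennreal sum_divide_distrib)
  finally show ?thesis .
qed

lemma logistic_bounds: "0 \<le> logistic t" "logistic t \<le> 1"
  unfolding logistic_def by (auto simp: add_pos_pos less_imp_le)

lemma sample_law_eps_mgf_le:
  "(\<integral>\<^sup>+ \<omega>. ennreal (exp (\<Sum>i<n. a i * eps x f0 \<omega> i)) \<partial>sample_law n x f0)
     \<le> ennreal (exp ((\<Sum>i<n. (a i)\<^sup>2) / 8))"
  unfolding sample_law_def eps_def by (rule Pi_bernoulli_centered_mgf_le) (simp add: logistic_bounds)

lemma finite_set_pmf_sample_law: "finite (set_pmf (sample_law n x f0))"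
proof (rule finite_subset)
  show "set_pmf (sample_law n x f0) \<subseteq> (\<lambda>S i. i \<in> S) ` Pow {..<n}"
  proof
    fix \<omega> assume "\<omega> \<in> set_pmf (sample_law n x f0)"
    hence "\<forall>i. i \<notin> {..<n} \<longrightarrow> \<omega> i = False"
      using set_Pi_pmf_subset[of "{..<n}" False] unfolding sample_law_def by blast
    hence "\<omega> = (\<lambda>i. i \<in> {i. \<omega> i})" "{i. \<omega> i} \<in> Pow {..<n}" by auto
    thus "\<omega> \<in> (\<lambda>S i. i \<in> S) ` Pow {..<n}" by blast
  qed
qed simp

section \<open>Orthonormal frames in the sample space\<close>

definition orthonormal_frame :: "nat \<Rightarrow> nat \<Rightarrow> (nat \<Rightarrow> nat \<Rightarrow> real) \<Rightarrow> bool" where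
  "orthonormal_frame n K w \<longleftrightarrow> (\<forall>k<K. \<forall>l<K. (\<Sum>i<n. w k i * w l i) = (if k = l then 1 else 0))"

definition in_frame_span :: "nat \<Rightarrow> nat \<Rightarrow> (nat \<Rightarrow> nat \<Rightarrow> real) \<Rightarrow> (nat \<Rightarrow> real) \<Rightarrow> bool" where
  "in_frame_span n K w v \<longleftrightarrow> (\<exists>c. \<forall>i<n. v i = (\<Sum>k<K. c k * w k i))"

definition proj_sq_norm :: "nat \<Rightarrow> nat \<Rightarrow> (nat \<Rightarrow> nat \<Rightarrow> real) \<Rightarrow> (nat \<Rightarrow> real) \<Rightarrow> real" where
  "proj_sq_norm n K w e = (\<Sum>k<K. (\<Sum>i<n. w k i * e i)\<^sup>2)"

lemma proj_sq_norm_nonneg: "proj_sq_norm n K w e \<ge> 0"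
  unfolding proj_sq_norm_def by (simp add: sum_nonneg)

lemma frame_coeff_sum_eq:
  assumes "orthonormal_frame n K w" "k < K"
  shows "(\<Sum>l<K. c l * (\<Sum>i<n. w l i * w k i)) = c k"
proof -
  have "(\<Sum>l<K. c l * (\<Sum>i<n. w l i * w k i)) = (\<Sum>l<K. if l = k then c k else 0)"
    using assms unfolding orthonormal_frame_def by (intro sum.cong) auto
  thus ?thesis using assms(2) by simp
qed

lemma sum_square_frame_comb:
  assumes "orthonormal_frame n K w"
  shows "(\<Sum>i<n. (\<Sum>k<K. c k * w k i)\<^sup>2) = (\<Sum>k<K. (c k)\<^sup>2)"
proof -
  have "(\<Sum>i<n. (\<Sum>k<K. c k * w k i)\<^sup>2) = (\<Sum>k<K. c k * (\<Sum>l<K. c l * (\<Sum>i<n. w l i * w k i)))"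
    by (simp add: power2_eq_square sum_product sum_distrib_left sum.swap[of _ "{..<n}"]
        algebra_simps)
  also have "\<dots> = (\<Sum>k<K. (c k)\<^sup>2)"
    using assms by (intro sum.cong) (simp_all add: frame_coeff_sum_eq power2_eq_square)
  finally show ?thesis .
qed

lemma frame_residual_orthogonal:
  assumes "orthonormal_frame n K w" "k < K"
  shows "(\<Sum>i<n. (v i - (\<Sum>l<K. (\<Sum>j<n. v j * w l j) * w l i)) * w k i) = 0"
proof -
  define c where "c l = (\<Sum>j<n. v j * w l j)" for l
  have "(\<Sum>i<n. (\<Sum>l<K. c l * w l i) * w k i) = (\<Sum>i<n. \<Sum>l<K. c l * (w l i * w k i))"
    by (simp add: sum_distrib_right mult.assoc)
  also have "\<dots> = (\<Sum>l<K. c l * (\<Sum>i<n. w l i * w k i))"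
    by (simp add: sum.swap[of _ "{..<n}"] sum_distrib_left)
  also have "\<dots> = c k"
    using assms by (rule frame_coeff_sum_eq)
  finally have proj: "(\<Sum>i<n. (\<Sum>l<K. c l * w l i) * w k i) = c k" .
  have "(\<Sum>i<n. (v i - (\<Sum>l<K. c l * w l i)) * w k i)
      = (\<Sum>i<n. v i * w k i) - (\<Sum>i<n. (\<Sum>l<K. c l * w l i) * w k i)"
    by (simp only: left_diff_distrib sum_subtractf)
  also have "\<dots> = 0"
    unfolding proj by (simp add: c_def)
  finally show ?thesis by (simp only: c_def)
qed

lemma orthonormal_frame_extend:
  assumes "orthonormal_frame n K w"
    and "\<And>k. k < K \<Longrightarrow> (\<Sum>i<n. r i * w k i) = 0" and "(\<Sum>i<n. (r i)\<^sup>2) = 1"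
  shows "orthonormal_frame n (Suc K) (w(K := r))"
  using assms unfolding orthonormal_frame_def
  by (auto simp: less_Suc_eq power2_eq_square mult.commute)

lemma in_frame_span_extend:
  assumes "in_frame_span n K w v"
  shows "in_frame_span n (Suc K) (w(K := r)) v"
proof -
  obtain c where "\<forall>i<n. v i = (\<Sum>k<K. c k * w k i)"
    using assms unfolding in_frame_span_def by blast
  hence "\<forall>i<n. v i = (\<Sum>k<Suc K. (c(K := 0)) k * (w(K := r)) k i)" by simp
  thus ?thesis unfolding in_frame_span_def by blast
qed

lemma orthonormal_frame_spanning:
  fixes vs :: "(nat \<Rightarrow> real) list"
  shows "\<exists>K w. K \<le> length vs \<and> orthonormal_frame n K w \<and> (\<forall>v\<in>set vs. in_frame_span n K w v)"
proof (induction vs)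
  case Nil
  show ?case by (rule exI[of _ 0]) (simp add: orthonormal_frame_def)
next
  case (Cons v vs)
  then obtain K w where K: "K \<le> length vs" and orth: "orthonormal_frame n K w"
    and span: "\<forall>u\<in>set vs. in_frame_span n K w u"
    by blast
  define c where "c k = (\<Sum>j<n. v j * w k j)" for k
  define r where "r i = v i - (\<Sum>k<K. c k * w k i)" for i
  define N where "N = (\<Sum>i<n. (r i)\<^sup>2)"
  have r_orth: "(\<Sum>i<n. r i * w k i) = 0" if "k < K" for k
    unfolding r_def c_def using orth that by (rule frame_residual_orthogonal)
  show ?case
  proof (cases "N = 0")
    case True
    hence "\<forall>i<n. r i = 0" unfolding N_def by (simp add: sum_nonneg_eq_0_iff)
    hence "in_frame_span n K w v" unfolding in_frame_span_def r_def by auto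
    thus ?thesis using K orth span by (intro exI[of _ K] exI[of _ w]) auto
  next
    case False
    have "N > 0" using False unfolding N_def by (simp add: order_le_neq_trans sum_nonneg)
    define w' where "w' = w(K := (\<lambda>i. r i / sqrt N))"
    have "orthonormal_frame n (Suc K) w'"
      unfolding w'_def
    proof (rule orthonormal_frame_extend[OF orth])
      show "(\<Sum>i<n. r i / sqrt N * w k i) = 0" if "k < K" for k
        using r_orth[OF that] by (simp add: sum_divide_distrib[symmetric])
      show "(\<Sum>i<n. (r i / sqrt N)\<^sup>2) = 1"
        using \<open>N > 0\<close> by (simp add: power_divide sum_divide_distrib[symmetric] N_def[symmetric])
    qed
    moreover have "in_frame_span n (Suc K) w' v"
      unfolding in_frame_span_def
      by (rule exI[of _ "c(K := sqrt N)"]) (use \<open>N > 0\<close> in \<open>simp add: w'_def r_def\<close>)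
    moreover have "\<forall>u\<in>set vs. in_frame_span n (Suc K) w' u"
      using span unfolding w'_def by (blast intro: in_frame_span_extend)
    ultimately show ?thesis
      using K by (intro exI[of _ "Suc K"] exI[of _ w']) auto
  qed
qed

lemma in_frame_span_sum:
  assumes "\<And>b. b \<in> B \<Longrightarrow> in_frame_span n K w (g b)"
  shows "in_frame_span n K w (\<lambda>i. \<Sum>b\<in>B. c b * g b i)"
proof -
  have "\<forall>b\<in>B. \<exists>e. \<forall>i<n. g b i = (\<Sum>k<K. e k * w k i)"
    using assms unfolding in_frame_span_def by blast
  from bchoice[OF this] obtain e where e: "\<forall>b\<in>B. \<forall>i<n. g b i = (\<Sum>k<K. e b k * w k i)"
    by blast
  have "(\<Sum>b\<in>B. c b * g b i) = (\<Sum>k<K. (\<Sum>b\<in>B. c b * e b k) * w k i)" if "i < n" for i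
  proof -
    have "(\<Sum>b\<in>B. c b * g b i) = (\<Sum>b\<in>B. \<Sum>k<K. c b * e b k * w k i)"
      using e that by (intro sum.cong) (simp_all add: sum_distrib_left mult.assoc)
    also have "\<dots> = (\<Sum>k<K. \<Sum>b\<in>B. c b * e b k * w k i)"
      by (rule sum.swap)
    finally show ?thesis by (simp add: sum_distrib_right)
  qed
  thus ?thesis unfolding in_frame_span_def by (intro exI[of _ "\<lambda>k. \<Sum>b\<in>B. c b * e b k"]) auto
qed

section \<open>Concentration of the projected noise\<close>

lemma proj_sq_norm_mgf_le:
  fixes P :: "'a pmf" and e :: "'a \<Rightarrow> nat \<Rightarrow> real"
  assumes fin: "finite (set_pmf P)"
    and subgauss: "\<And>a. (\<integral>\<^sup>+ \<omega>. ennreal (exp (\<Sum>i<n. a i * e \<omega> i)) \<partial>P)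
                         \<le> ennreal (exp ((\<Sum>i<n. (a i)\<^sup>2) / 8))"
    and orth: "orthonormal_frame n K w" and \<mu>: "0 \<le> \<mu>" "\<mu> < 1"
  shows "(\<integral>\<^sup>+ \<omega>. ennreal (exp (2 * \<mu> * proj_sq_norm n K w (e \<omega>))) \<partial>P)
         \<le> ennreal ((1 / sqrt (1 - \<mu>)) ^ K)"
proof -
  let ?G = "PiM {..<K} (\<lambda>_. std_normal)"
  define s where "s = 2 * sqrt \<mu>"
  have s2: "s\<^sup>2 = 4 * \<mu>" using \<mu> by (simp add: s_def power_mult_distrib)
  define Y where "Y \<omega> k = (\<Sum>i<n. w k i * e \<omega> i)" for \<omega> k
  define F where "F \<omega> g = ennreal (exp (\<Sum>k<K. (s * Y \<omega> k) * g k))" for \<omega> g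
  have F_measurable: "F \<omega> \<in> borel_measurable ?G" for \<omega>
    unfolding F_def by measurable
  text \<open>Gaussian decoupling: the exponential of a square is a Gaussian average of exponentials
    of linear forms, to which the sub-Gaussian bound applies after Fubini.\<close>
  have decouple: "ennreal (exp (2 * \<mu> * proj_sq_norm n K w (e \<omega>))) = (\<integral>\<^sup>+ g. F \<omega> g \<partial>?G)" for \<omega>
  proof -
    have "proj_sq_norm n K w (e \<omega>) = (\<Sum>k<K. (Y \<omega> k)\<^sup>2)"
      by (simp add: proj_sq_norm_def Y_def)
    thus ?thesis
      unfolding F_def std_normal_PiM_nn_integral_exp_linear
      by (simp add: power_mult_distrib s2 sum_distrib_left mult.assoc)
  qed
  have linear_bound: "(\<integral>\<^sup>+ \<omega>. F \<omega> g \<partial>P) \<le> ennreal (exp ((\<mu> / 2) * (\<Sum>k<K. (g k)\<^sup>2)))" for g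
  proof -
    define a where "a i = s * (\<Sum>k<K. g k * w k i)" for i
    have "(\<Sum>k<K. (s * Y \<omega> k) * g k) = (\<Sum>i<n. a i * e \<omega> i)" for \<omega>
      unfolding Y_def a_def
      by (simp add: sum_distrib_left sum_distrib_right sum.swap[of _ "{..<K}"] algebra_simps)
    hence "(\<integral>\<^sup>+ \<omega>. F \<omega> g \<partial>P) = (\<integral>\<^sup>+ \<omega>. ennreal (exp (\<Sum>i<n. a i * e \<omega> i)) \<partial>P)"
      unfolding F_def by simp
    also have "\<dots> \<le> ennreal (exp ((\<Sum>i<n. (a i)\<^sup>2) / 8))"
      by (rule subgauss)
    also have "(\<Sum>i<n. (a i)\<^sup>2) = s\<^sup>2 * (\<Sum>k<K. (g k)\<^sup>2)"
      unfolding a_def using sum_square_frame_comb[OF orth, of g]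
      by (simp add: power_mult_distrib sum_distrib_left[symmetric])
    finally show ?thesis by (simp add: s2)
  qed
  have "(\<integral>\<^sup>+ \<omega>. ennreal (exp (2 * \<mu> * proj_sq_norm n K w (e \<omega>))) \<partial>P)
      = (\<Sum>\<omega>\<in>set_pmf P. (\<integral>\<^sup>+ g. F \<omega> g * pmf P \<omega> \<partial>?G))"
    by (simp add: nn_integral_measure_pmf_finite[OF fin] decouple nn_integral_multc F_measurable)
  also have "\<dots> = (\<integral>\<^sup>+ g. (\<integral>\<^sup>+ \<omega>. F \<omega> g \<partial>P) \<partial>?G)"
    by (subst nn_integral_sum[symmetric])
       (auto intro!: borel_measurable_times_ennreal F_measurable nn_integral_cong
             simp: nn_integral_measure_pmf_finite[OF fin])
  also have "\<dots> \<le> (\<integral>\<^sup>+ g. ennreal (exp ((\<mu> / 2) * (\<Sum>k<K. (g k)\<^sup>2))) \<partial>?G)"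
    by (intro nn_integral_mono linear_bound)
  also have "\<dots> = ennreal ((1 / sqrt (1 - \<mu>)) ^ K)"
    using \<mu> by (subst std_normal_PiM_nn_integral_exp_square) simp_all
  finally show ?thesis .
qed

lemma proj_sq_norm_tail_le:
  fixes P :: "'a pmf" and e :: "'a \<Rightarrow> nat \<Rightarrow> real"
  assumes fin: "finite (set_pmf P)"
    and subgauss: "\<And>a. (\<integral>\<^sup>+ \<omega>. ennreal (exp (\<Sum>i<n. a i * e \<omega> i)) \<partial>P)
                         \<le> ennreal (exp ((\<Sum>i<n. (a i)\<^sup>2) / 8))"
    and orth: "orthonormal_frame n K w" and \<mu>: "0 \<le> \<mu>" "\<mu> < 1"
  shows "measure_pmf.prob P {\<omega>. r < proj_sq_norm n K w (e \<omega>)}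
         \<le> exp (- (2 * \<mu> * r)) * (1 / sqrt (1 - \<mu>)) ^ K"
proof -
  let ?Q = "\<lambda>\<omega>. proj_sq_norm n K w (e \<omega>)"
  have "ennreal (measure_pmf.prob P {\<omega>. r < ?Q \<omega>}) = (\<integral>\<^sup>+ \<omega>. indicator {\<omega>. r < ?Q \<omega>} \<omega> \<partial>P)"
    by (simp add: measure_pmf.emeasure_eq_measure[symmetric])
  also have "\<dots> \<le> (\<integral>\<^sup>+ \<omega>. ennreal (exp (- (2 * \<mu> * r))) * ennreal (exp (2 * \<mu> * ?Q \<omega>)) \<partial>P)"
  proof (intro nn_integral_mono)
    fix \<omega>
    have "r < ?Q \<omega> \<Longrightarrow> 1 \<le> exp (- (2 * \<mu> * r)) * exp (2 * \<mu> * ?Q \<omega>)"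
      using \<mu> by (simp add: exp_add[symmetric] mult_left_mono)
    thus "indicator {\<omega>. r < ?Q \<omega>} \<omega> \<le> ennreal (exp (- (2 * \<mu> * r))) * ennreal (exp (2 * \<mu> * ?Q \<omega>))"
      by (auto simp: indicator_def ennreal_mult'[symmetric])
  qed
  also have "\<dots> = ennreal (exp (- (2 * \<mu> * r))) * (\<integral>\<^sup>+ \<omega>. ennreal (exp (2 * \<mu> * ?Q \<omega>)) \<partial>P)"
    by (rule nn_integral_cmult) simp
  also have "\<dots> \<le> ennreal (exp (- (2 * \<mu> * r))) * ennreal ((1 / sqrt (1 - \<mu>)) ^ K)"
    by (intro mult_left_mono proj_sq_norm_mgf_le[OF fin subgauss orth \<mu>]) simp
  also have "\<dots> = ennreal (exp (- (2 * \<mu> * r)) * (1 / sqrt (1 - \<mu>)) ^ K)"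
    using \<mu> by (simp add: ennreal_mult')
  finally show ?thesis
    using \<mu> by (subst (asm) ennreal_le_iff) auto
qed

lemma chernoff_exponent_le:
  fixes \<mu> t :: real and d K :: nat
  assumes \<mu>: "0 \<le> \<mu>" "\<mu> \<le> 1 / 2" and "K \<le> d" and "t \<ge> 0"
  shows "exp (- (2 * \<mu> * (sqrt d / 2 + sqrt (5 * t))\<^sup>2)) * (1 / sqrt (1 - \<mu>)) ^ K
         \<le> exp (d * \<mu>\<^sup>2 - 2 * \<mu> * sqrt d * sqrt (5 * t) - 10 * \<mu> * t)"
proof -
  have root: "1 / sqrt (1 - \<mu>) = exp (- ln (1 - \<mu>) / 2)"
    using \<mu> by (simp add: powr_half_sqrt[symmetric] powr_def exp_minus inverse_eq_divide)
  have "(1 / sqrt (1 - \<mu>)) ^ K \<le> (1 / sqrt (1 - \<mu>)) ^ d"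
    using \<mu> \<open>K \<le> d\<close> by (intro power_increasing) (simp_all add: real_sqrt_le_1_iff)
  also have "\<dots> = exp (d * (- ln (1 - \<mu>) / 2))"
    unfolding root by (simp only: exp_of_nat_mult[symmetric])
  also have "\<dots> \<le> exp (d * ((\<mu> + 2 * \<mu>\<^sup>2) / 2))"
    using ln_one_minus_pos_lower_bound[OF \<mu>] by (intro exp_mono mult_left_mono) auto
  finally have "(1 / sqrt (1 - \<mu>)) ^ K \<le> exp (d * ((\<mu> + 2 * \<mu>\<^sup>2) / 2))" .
  hence "exp (- (2 * \<mu> * (sqrt d / 2 + sqrt (5 * t))\<^sup>2)) * (1 / sqrt (1 - \<mu>)) ^ K
      \<le> exp (- (2 * \<mu> * (sqrt d / 2 + sqrt (5 * t))\<^sup>2) + d * ((\<mu> + 2 * \<mu>\<^sup>2) / 2))"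
    unfolding exp_add by (rule mult_left_mono) simp_all
  also have "- (2 * \<mu> * (sqrt d / 2 + sqrt (5 * t))\<^sup>2) + d * ((\<mu> + 2 * \<mu>\<^sup>2) / 2)
      = d * \<mu>\<^sup>2 - 2 * \<mu> * sqrt d * sqrt (5 * t) - 10 * \<mu> * t"
    using \<open>t \<ge> 0\<close> by (simp add: power2_eq_square algebra_simps)
  finally show ?thesis .
qed

lemma chernoff_exponent_choice:
  fixes t :: real and d K :: nat
  assumes "K \<le> d" and "t \<ge> 0"
  shows "\<exists>\<mu>. 0 \<le> \<mu> \<and> \<mu> < 1 \<and>
           exp (- (2 * \<mu> * (sqrt d / 2 + sqrt (5 * t))\<^sup>2)) * (1 / sqrt (1 - \<mu>)) ^ K \<le> exp (- t)"
proof (cases "t \<le> d / 4")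
  case True
  \<comment> \<open>For d = 0 division by zero makes \<mu> = 0, which is fine since then t = 0.\<close>
  define \<mu> where "\<mu> = sqrt t / sqrt d"
  have "\<mu> \<le> 1 / 2"
  proof -
    have "sqrt t \<le> sqrt (d / 4)" using True by (rule real_sqrt_le_mono)
    thus ?thesis by (simp add: \<mu>_def real_sqrt_divide divide_le_eq)
  qed
  moreover have "\<mu> \<ge> 0" using \<open>t \<ge> 0\<close> by (simp add: \<mu>_def)
  moreover have "d * \<mu>\<^sup>2 - 2 * \<mu> * sqrt d * sqrt (5 * t) - 10 * \<mu> * t \<le> - t"
  proof (cases "d = 0")
    case False
    have "d * \<mu>\<^sup>2 = t" "2 * \<mu> * sqrt d * sqrt (5 * t) = 2 * sqrt 5 * t"
      using False \<open>t \<ge> 0\<close> by (simp_all add: \<mu>_def power_divide real_sqrt_mult)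
    moreover have "2 * t \<le> 2 * sqrt 5 * t" "0 \<le> 10 * \<mu> * t"
      using \<open>t \<ge> 0\<close> \<open>\<mu> \<ge> 0\<close> by (simp_all add: mult_right_mono)
    ultimately show ?thesis by linarith
  qed (use True \<open>t \<ge> 0\<close> in simp)
  ultimately show ?thesis
    using chernoff_exponent_le[of \<mu> K d t] assms by (intro exI[of _ \<mu>]) (auto elim!: order_trans)
next
  case False
  have "0 \<le> sqrt d * sqrt (5 * t)" using \<open>t \<ge> 0\<close> by simp
  hence "d * (1 / 2)\<^sup>2 - 2 * (1 / 2) * sqrt d * sqrt (5 * t) - 10 * (1 / 2) * t \<le> - t"
    using False by (simp add: power2_eq_square, linarith)
  thus ?thesis
    using chernoff_exponent_le[of "1 / 2" K d t] assms by (intro exI[of _ "1 / 2"]) (auto elim!: order_trans)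
qed

lemma proj_sq_norm_tail_exp_le:
  fixes P :: "'a pmf" and e :: "'a \<Rightarrow> nat \<Rightarrow> real"
  assumes fin: "finite (set_pmf P)"
    and subgauss: "\<And>a. (\<integral>\<^sup>+ \<omega>. ennreal (exp (\<Sum>i<n. a i * e \<omega> i)) \<partial>P)
                         \<le> ennreal (exp ((\<Sum>i<n. (a i)\<^sup>2) / 8))"
    and orth: "orthonormal_frame n K w" and "K \<le> d" and "t \<ge> 0"
  shows "measure_pmf.prob P {\<omega>. (sqrt d / 2 + sqrt (5 * t))\<^sup>2 < proj_sq_norm n K w (e \<omega>)}
         \<le> exp (- t)"
proof -
  obtain \<mu> where \<mu>: "0 \<le> \<mu>" "\<mu> < 1"
    and bound: "exp (- (2 * \<mu> * (sqrt d / 2 + sqrt (5 * t))\<^sup>2)) * (1 / sqrt (1 - \<mu>)) ^ K \<le> exp (- t)"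
    using chernoff_exponent_choice[OF \<open>K \<le> d\<close> \<open>t \<ge> 0\<close>] by blast
  show ?thesis
    using proj_sq_norm_tail_le[OF fin subgauss orth \<mu>] bound by (rule order_trans)
qed

section \<open>The supremum over a sum of linear spaces\<close>

lemma emp_ratio_le_proj_norm:
  assumes orth: "orthonormal_frame n K w" and "n > 0"
    and span: "in_frame_span n K w (\<lambda>i. u (x i))" and "emp_norm n x u \<noteq> 0"
  shows "emp_inner n x e u / emp_norm n x u \<le> sqrt (proj_sq_norm n K w e) / sqrt n"
proof -
  obtain c where c: "\<forall>i<n. u (x i) = (\<Sum>k<K. c k * w k i)"
    using span unfolding in_frame_span_def by blast
  define Y where "Y k = (\<Sum>i<n. w k i * e i)" for k
  define A where "A = sqrt (\<Sum>k<K. (c k)\<^sup>2)"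
  have inner: "(\<Sum>i<n. e i * u (x i)) = (\<Sum>k<K. c k * Y k)"
    using c by (simp add: Y_def sum_distrib_left sum.swap[of _ "{..<n}"] algebra_simps)
  have "(\<Sum>i<n. (u (x i))\<^sup>2) = (\<Sum>k<K. (c k)\<^sup>2)"
    using c sum_square_frame_comb[OF orth, of c] by simp
  hence norm: "emp_norm n x u = A / sqrt n"
    unfolding emp_norm_def A_def by (simp add: real_sqrt_divide)
  have "A > 0"
    using \<open>emp_norm n x u \<noteq> 0\<close> norm unfolding A_def by (simp add: sum_nonneg order_le_neq_trans)
  have cauchy_schwarz: "(\<Sum>k<K. c k * Y k) \<le> A * sqrt (\<Sum>k<K. (Y k)\<^sup>2)"
  proof -
    have "(\<Sum>k<K. c k * Y k) \<le> (\<Sum>k<K. \<bar>c k\<bar> * \<bar>Y k\<bar>)"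
      by (intro sum_mono) (simp add: abs_mult[symmetric])
    also have "\<dots> \<le> L2_set c {..<K} * L2_set Y {..<K}" by (rule L2_set_mult_ineq)
    finally show ?thesis by (simp add: L2_set_def A_def)
  qed
  have "emp_inner n x e u / emp_norm n x u = (\<Sum>k<K. c k * Y k) / n * sqrt n / A"
    unfolding emp_inner_def norm inner by simp
  also have "\<dots> \<le> A * sqrt (\<Sum>k<K. (Y k)\<^sup>2) / n * sqrt n / A"
    using \<open>A > 0\<close> cauchy_schwarz by (intro divide_right_mono mult_right_mono) auto
  also have "\<dots> = sqrt (\<Sum>k<K. (Y k)\<^sup>2) / sqrt n"
    using \<open>A > 0\<close> \<open>n > 0\<close> real_sqrt_mult_self[of n]
    by (simp add: field_simps del: real_sqrt_mult_self)
  finally show ?thesis by (simp add: proj_sq_norm_def Y_def)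
qed

lemma sup_ratio_le_proj_norm:
  assumes "orthonormal_frame n K w" and "n > 0"
    and "\<And>u. u \<in> A \<Longrightarrow> in_frame_span n K w (\<lambda>i. u (x i))"
  shows "sup_ratio n x e A \<le> ereal (sqrt (proj_sq_norm n K w e) / sqrt n)"
  unfolding sup_ratio_def using assms by (auto intro!: SUP_least emp_ratio_le_proj_norm)

lemma sum_fun_apply: "(\<Sum>b\<in>B. f b) z = (\<Sum>b\<in>B. (f b :: 'x \<Rightarrow> real) z)"
  by (induction B rule: infinite_finite_induct) auto

lemma span_eq_sum:
  assumes "finite B" "u \<in> fvs.span B"
  obtains c where "\<And>z. u z = (\<Sum>b\<in>B. c b * b z)"
proof -
  obtain c where "u = (\<Sum>b\<in>B. fscale (c b) b)"
    using assms fvs.span_finite[OF assms(1)] by auto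
  thus ?thesis using that by (simp add: sum_fun_apply fscale_def)
qed

lemma lin_space_dim_basis:
  assumes "lin_space_dim S D"
  obtains B where "finite B" "card B = D" "S \<subseteq> fvs.span B"
proof -
  obtain B0 where B0: "finite B0" "S = fvs.span B0" "fvs.dim S = D"
    using assms unfolding lin_space_dim_def by blast
  obtain B where B: "B \<subseteq> S" "fvs.independent B" "S \<subseteq> fvs.span B" "card B = fvs.dim S"
    by (rule fvs.basis_exists)
  have "finite B"
    using fvs.independent_span_bound[OF B0(1) B(2)] B(1) B0(2) by auto
  thus ?thesis using that B B0 by auto
qed

lemma msum_orthonormal_frame:
  fixes x :: "nat \<Rightarrow> 'x"
  assumes "lin_space_dim S D" "lin_space_dim S' D'"
  obtains K w where "K \<le> D + D'" "orthonormal_frame n K w"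
    "\<And>u. u \<in> msum S S' \<Longrightarrow> in_frame_span n K w (\<lambda>i. u (x i))"
proof -
  obtain B where B: "finite B" "card B = D" "S \<subseteq> fvs.span B"
    using lin_space_dim_basis[OF assms(1)] by blast
  obtain B' where B': "finite B'" "card B' = D'" "S' \<subseteq> fvs.span B'"
    using lin_space_dim_basis[OF assms(2)] by blast
  obtain bs where bs: "set bs = B \<union> B'" "distinct bs"
    using finite_distinct_list[of "B \<union> B'"] B B' by blast
  obtain K w where K: "K \<le> length bs" and orth: "orthonormal_frame n K w"
    and span: "\<forall>v\<in>set (map (\<lambda>b i. b (x i)) bs). in_frame_span n K w v"
    using orthonormal_frame_spanning[of "map (\<lambda>b i. b (x i)) bs" n] by auto
  have "length bs \<le> D + D'"
    using bs B B' card_Un_le[of B B'] by (simp add: distinct_card[symmetric])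
  moreover have "in_frame_span n K w (\<lambda>i. u (x i))" if u: "u \<in> msum S S'" for u
  proof -
    obtain a b where ab: "u = a + b" "a \<in> S" "b \<in> S'"
      using u unfolding msum_def by blast
    have "a \<in> fvs.span (B \<union> B')" "b \<in> fvs.span (B \<union> B')"
      using ab B B' fvs.span_mono[of B "B \<union> B'"] fvs.span_mono[of B' "B \<union> B'"] by blast+
    hence "u \<in> fvs.span (B \<union> B')"
      using ab fvs.span_add by simp
    then obtain c where "\<And>z. u z = (\<Sum>b\<in>B \<union> B'. c b * b z)"
      using span_eq_sum B B' by (metis finite_UnI)
    moreover have "in_frame_span n K w (\<lambda>i. \<Sum>b\<in>B \<union> B'. c b * b (x i))"
      using span bs by (intro in_frame_span_sum) auto
    ultimately show ?thesis by simp
  qed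
  ultimately show ?thesis
    using K by (intro that[of K w] orth) auto
qed

lemma sup_ratio_tail_le:
  fixes x :: "nat \<Rightarrow> 'x"
  assumes "n > 0" "lin_space_dim S D" "lin_space_dim S' D'" "A \<subseteq> msum S S'" "t \<ge> 0"
  shows "measure_pmf.prob (sample_law n x f0)
           {\<omega>. sup_ratio n x (eps x f0 \<omega>) A > ereal (sqrt (real (D + D') / (4 * real n)) + sqrt (5 * t / real n))}
         \<le> exp (- t)"
proof -
  obtain K w where "K \<le> D + D'" and orth: "orthonormal_frame n K w"
    and span: "\<And>u. u \<in> msum S S' \<Longrightarrow> in_frame_span n K w (\<lambda>i. u (x i))"
    using msum_orthonormal_frame[OF assms(2,3)] by metis
  define R where "R = sqrt (D + D') / 2 + sqrt (5 * t)"
  have threshold: "sqrt (real (D + D') / (4 * real n)) + sqrt (5 * t / real n) = R / sqrt n"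
  proof -
    have "sqrt (real (D + D') / (4 * real n)) = sqrt (D + D') / (2 * sqrt n)"
      by (subst real_sqrt_divide) (simp add: real_sqrt_mult)
    thus ?thesis by (simp add: R_def real_sqrt_divide add_divide_distrib)
  qed
  have "{\<omega>. sup_ratio n x (eps x f0 \<omega>) A > ereal (sqrt (real (D + D') / (4 * real n)) + sqrt (5 * t / real n))}
      \<subseteq> {\<omega>. R\<^sup>2 < proj_sq_norm n K w (eps x f0 \<omega>)}"
  proof safe
    fix \<omega>
    assume "sup_ratio n x (eps x f0 \<omega>) A > ereal (sqrt (real (D + D') / (4 * real n)) + sqrt (5 * t / real n))"
    moreover have "sup_ratio n x (eps x f0 \<omega>) A \<le> ereal (sqrt (proj_sq_norm n K w (eps x f0 \<omega>)) / sqrt n)"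
      using assms(1,4) span by (intro sup_ratio_le_proj_norm[OF orth]) auto
    ultimately have "R / sqrt n < sqrt (proj_sq_norm n K w (eps x f0 \<omega>)) / sqrt n"
      unfolding threshold using less_le_trans by fastforce
    hence "R < sqrt (proj_sq_norm n K w (eps x f0 \<omega>))"
      using \<open>n > 0\<close> by (simp add: divide_less_cancel)
    moreover have "R \<ge> 0" using \<open>t \<ge> 0\<close> by (simp add: R_def)
    ultimately show "R\<^sup>2 < proj_sq_norm n K w (eps x f0 \<omega>)"
      using proj_sq_norm_nonneg by (metis power_strict_mono real_sqrt_pow2 zero_less_numeral)
  qed
  hence "measure_pmf.prob (sample_law n x f0)
           {\<omega>. sup_ratio n x (eps x f0 \<omega>) A > ereal (sqrt (real (D + D') / (4 * real n)) + sqrt (5 * t / real n))}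
         \<le> measure_pmf.prob (sample_law n x f0) {\<omega>. R\<^sup>2 < proj_sq_norm n K w (eps x f0 \<omega>)}"
    by (rule measure_pmf.finite_measure_mono) simp
  also have "\<dots> \<le> exp (- t)"
    unfolding R_def
    by (rule proj_sq_norm_tail_exp_le[OF finite_set_pmf_sample_law sample_law_eps_mgf_le orth])
       (use \<open>K \<le> D + D'\<close> \<open>t \<ge> 0\<close> in simp_all)
  finally show ?thesis .
qed

section \<open>Uniformity over the models\<close>

lemma Smodel_subspace: "fvs.subspace (Smodel \<phi> m)"
  unfolding fvs.subspace_def
proof (intro conjI ballI allI)
  show "0 \<in> Smodel \<phi> m"
    unfolding Smodel_def by (intro CollectI exI[of _ "\<lambda>_. 0"]) (simp add: fun_eq_iff)
next
  fix u v assume "u \<in> Smodel \<phi> m" "v \<in> Smodel \<phi> m"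
  then obtain a b where "u = (\<lambda>z. \<Sum>j\<in>m. a j * \<phi> j z)" "v = (\<lambda>z. \<Sum>j\<in>m. b j * \<phi> j z)"
    unfolding Smodel_def by blast
  hence "u + v = (\<lambda>z. \<Sum>j\<in>m. (a j + b j) * \<phi> j z)"
    by (simp add: fun_eq_iff distrib_right sum.distrib)
  thus "u + v \<in> Smodel \<phi> m"
    unfolding Smodel_def by (intro CollectI exI[of _ "\<lambda>j. a j + b j"]) simp
next
  fix c u assume "u \<in> Smodel \<phi> m"
  then obtain a where "u = (\<lambda>z. \<Sum>j\<in>m. a j * \<phi> j z)"
    unfolding Smodel_def by blast
  hence "fscale c u = (\<lambda>z. \<Sum>j\<in>m. (c * a j) * \<phi> j z)"
    by (simp add: fun_eq_iff fscale_def sum_distrib_left mult.assoc)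
  thus "fscale c u \<in> Smodel \<phi> m"
    unfolding Smodel_def by (intro CollectI exI[of _ "\<lambda>j. c * a j"]) simp
qed

lemma Smodel_eq_span:
  assumes "finite m"
  shows "Smodel \<phi> m = fvs.span (\<phi> ` m)"
proof
  show "Smodel \<phi> m \<subseteq> fvs.span (\<phi> ` m)"
  proof
    fix u assume "u \<in> Smodel \<phi> m"
    then obtain \<beta> where "u = (\<lambda>z. \<Sum>j\<in>m. \<beta> j * \<phi> j z)"
      unfolding Smodel_def by blast
    hence "u = (\<Sum>j\<in>m. fscale (\<beta> j) (\<phi> j))"
      by (simp add: fun_eq_iff sum_fun_apply fscale_def)
    thus "u \<in> fvs.span (\<phi> ` m)"
      by (simp add: fvs.span_sum fvs.span_scale fvs.span_base)
  qed
next
  have "\<phi> j \<in> Smodel \<phi> m" if "j \<in> m" for j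
  proof -
    have "(\<Sum>j'\<in>m. (if j' = j then 1 else 0) * \<phi> j' z) = (\<Sum>j'\<in>m. if j' = j then \<phi> j z else 0)"
      for z by (intro sum.cong) auto
    hence "\<phi> j = (\<lambda>z. \<Sum>j'\<in>m. (if j' = j then 1 else 0) * \<phi> j' z)"
      using that assms by (simp add: fun_eq_iff)
    thus ?thesis
      unfolding Smodel_def by (intro CollectI exI[of _ "\<lambda>j'. if j' = j then 1 else 0"]) simp
  qed
  thus "fvs.span (\<phi> ` m) \<subseteq> Smodel \<phi> m"
    by (intro fvs.span_minimal Smodel_subspace) auto
qed

lemma lin_space_dim_Smodel:
  assumes "finite m"
  shows "lin_space_dim (Smodel \<phi> m) (Dm \<phi> m)"
  unfolding lin_space_dim_def Smodel_eq_span[OF assms] Dm_def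
  using assms by blast

lemma msum_Int_subset: "msum (S \<inter> L) (S' \<inter> L') \<subseteq> msum S S'"
  unfolding msum_def by blast

lemma measure_pmf_INT_ge:
  fixes P :: "'a pmf"
  assumes "finite I" "\<And>i. i \<in> I \<Longrightarrow> measure_pmf.prob P (- A i) \<le> b i"
  shows "1 - (\<Sum>i\<in>I. b i) \<le> measure_pmf.prob P (\<Inter>i\<in>I. A i)"
proof -
  have "measure_pmf.prob P (\<Union>i\<in>I. - A i) \<le> (\<Sum>i\<in>I. measure_pmf.prob P (- A i))"
    using assms(1) by (rule measure_pmf.finite_measure_subadditive_finite) simp
  also have "\<dots> \<le> (\<Sum>i\<in>I. b i)"
    using assms(2) by (rule sum_mono)
  finally have "measure_pmf.prob P (\<Union>i\<in>I. - A i) \<le> (\<Sum>i\<in>I. b i)" .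
  moreover have "(\<Inter>i\<in>I. A i) = space (measure_pmf P) - (\<Union>i\<in>I. - A i)" by auto
  ultimately show ?thesis
    using measure_pmf.finite_measure_compl[of "\<Union>i\<in>I. - A i" P] by (simp add: measure_pmf.prob_space)
qed

lemma sup_ratio_model_uniform_ge:
  fixes x :: "nat \<Rightarrow> 'x" and \<phi> :: "nat \<Rightarrow> 'x \<Rightarrow> real"
  assumes "n > 0" "finite m" "finite \<M>" "\<And>m'. m' \<in> \<M> \<Longrightarrow> finite m' \<and> L m' \<ge> 0" "\<xi> \<ge> 0"
  shows "1 - (\<Sum>m'\<in>\<M>. exp (- L m' * real (Dm \<phi> m'))) * exp (- \<xi>)
         \<le> measure_pmf.prob (sample_law n x f0)
              (\<Inter>m'\<in>\<M>.
                 {\<omega>. sup_ratio n x (eps x f0 \<omega>) (msum (Smodel \<phi> m \<inter> Linf n x C0) (Smodel \<phi> m' \<inter> Linf n x C0))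
                      \<le> ereal (sqrt (real (Dm \<phi> m + Dm \<phi> m') / (4 * real n))
                               + sqrt (5 * (L m' * real (Dm \<phi> m') + \<xi>) / real n))})"
  unfolding sum_distrib_right
proof (rule measure_pmf_INT_ge[OF \<open>finite \<M>\<close>])
  fix m' assume "m' \<in> \<M>"
  hence "finite m'" "L m' * real (Dm \<phi> m') + \<xi> \<ge> 0"
    using assms(4,5) by auto
  from sup_ratio_tail_le[OF \<open>n > 0\<close> lin_space_dim_Smodel[OF \<open>finite m\<close>]
      lin_space_dim_Smodel[OF this(1)] msum_Int_subset this(2)]
  show "measure_pmf.prob (sample_law n x f0)
          (- {\<omega>. sup_ratio n x (eps x f0 \<omega>) (msum (Smodel \<phi> m \<inter> Linf n x C0) (Smodel \<phi> m' \<inter> Linf n x C0))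
                \<le> ereal (sqrt (real (Dm \<phi> m + Dm \<phi> m') / (4 * real n))
                         + sqrt (5 * (L m' * real (Dm \<phi> m') + \<xi>) / real n))})
        \<le> exp (- L m' * real (Dm \<phi> m')) * exp (- \<xi>)"
    by (simp add: Compl_eq not_le exp_add[symmetric])
qed

theorem lemma6p3:
  fixes n :: nat and x :: "nat \<Rightarrow> 'x" and f0 :: "'x \<Rightarrow> real" and C0 :: real
  assumes "C0 > 0" and "n > 0"
  shows "(\<forall>(S :: ('x \<Rightarrow> real) set) S' D D' t.
            lin_space_dim S D \<and> lin_space_dim S' D' \<and> t \<ge> 0 \<longrightarrow>
            measure_pmf.prob (sample_law n x f0)
              {\<omega>. sup_ratio n x (eps x f0 \<omega>) (msum (S \<inter> Linf n x C0) (S' \<inter> Linf n x C0))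
                   > ereal (sqrt (real (D + D') / (4 * real n)) + sqrt (5 * t / real n))}
            \<le> exp (- t))
       \<and> (\<forall>(\<phi> :: nat \<Rightarrow> 'x \<Rightarrow> real) (M :: nat) (L :: nat set \<Rightarrow> real) \<xi> m.
            (\<forall>m'\<in>Pow {1..M}. L m' > 0) \<and> \<xi> > 0 \<and> m \<in> Pow {1..M} \<longrightarrow>
            measure_pmf.prob (sample_law n x f0)
              (\<Inter>m'\<in>Pow {1..M}.
                 {\<omega>. sup_ratio n x (eps x f0 \<omega>) (msum (Smodel \<phi> m \<inter> Linf n x C0) (Smodel \<phi> m' \<inter> Linf n x C0))
                      \<le> ereal (sqrt (real (Dm \<phi> m + Dm \<phi> m') / (4 * real n))
                               + sqrt (5 * (L m' * real (Dm \<phi> m') + \<xi>) / real n))})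
            \<ge> 1 - (\<Sum>m'\<in>Pow {1..M}. exp (- L m' * real (Dm \<phi> m'))) * exp (- \<xi>))"
  by (intro conjI allI impI; elim conjE;
      ((rule sup_ratio_tail_le[OF assms(2) _ _ msum_Int_subset]; assumption)
       | (rule sup_ratio_model_uniform_ge[OF assms(2)];
          auto intro: finite_subset[OF _ finite_atLeastAtMost] simp: less_imp_le)))

end
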